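(* Let $X$ be a finite connected quandle. Then its type $t_X$ divides $|\mathrm{Inn}(X)|/|X|$.
   Context: A quandle is a set $X$ with a binary operation $\lhd$ such that $a\lhd a=a$ for all $a$, each map $x\mapsto x\lhd a$ is a bijection of $X$, and $(a\lhd b)\lhd c=(a\lhd c)\lhd(b\lhd c)$ for all $a,b,c$. The adjoint group $\mathrm{As}(X)$ is the group with generators $e_x$ ($x\in X$) and relations $e_{x\lhd y}=e_y^{-1}e_xe_y$. It acts on $X$ from the right by $x\cdot e_y=x\lhd y$; $X$ is connected if this action is transitive; $\mathrm{Inn}(X)\subset\mathfrak S_X$ is the image of the corresponding homomorphism $\mathrm{As}(X)\to\mathfrak S_X$. $x\lhd^N y$ denotes the $N$-fold application of $\bullet\lhd y$ to $x$; the type $t_X$ is the smallest positive integer $N$ with $x\lhd^N y=x$ for all $x,y\in X$ (it exists for finite $X$). *)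

theory Defs
  imports Main
begin

text \<open>A quandle structure on the whole (finite) type 'a, with operation
  op x y = x \<lhd> y.\<close>
definition is_quandle :: "('a \<Rightarrow> 'a \<Rightarrow> 'a) \<Rightarrow> bool" where
  "is_quandle op \<longleftrightarrow>
     (\<forall>a. op a a = a) \<and>
     (\<forall>a. bij (\<lambda>x. op x a)) \<and>
     (\<forall>a b c. op (op a b) c = op (op a c) (op b c))"

inductive_set Inn :: "('a \<Rightarrow> 'a \<Rightarrow> 'a) \<Rightarrow> ('a \<Rightarrow> 'a) set" for op where
  Inn_id: "id \<in> Inn op"
| Inn_R: "f \<in> Inn op \<Longrightarrow> (\<lambda>x. op x y) \<circ> f \<in> Inn op"
| Inn_Rinv: "f \<in> Inn op \<Longrightarrow> inv (\<lambda>x. op x y) \<circ> f \<in> Inn op"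

definition quandle_connected :: "('a \<Rightarrow> 'a \<Rightarrow> 'a) \<Rightarrow> bool" where
  "quandle_connected op \<longleftrightarrow> (\<forall>x z. \<exists>g\<in>Inn op. g x = z)"

definition quandle_type :: "('a \<Rightarrow> 'a \<Rightarrow> 'a) \<Rightarrow> nat" where
  "quandle_type op = (LEAST N. 0 < N \<and> (\<forall>x y. ((\<lambda>z. op z y) ^^ N) x = x))"

end

theory Submission
  imports Defs "HOL-Algebra.Group_Action" "HOL-Algebra.Multiplicative_Group"
begin

text \<open>Inn(X) acts transitively on X, so by the orbit-stabilizer theorem every stabilizer
  has order |Inn(X)|/|X|. The right translation by y fixes y (as y \<lhd> y = y), hence lies
  in the stabilizer of y, and its order divides the order of that stabilizer. Thus every
  right translation raised to the power |Inn(X)|/|X| is the identity, and the least such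
  common exponent, the type, divides it.\<close>

lemma Inn_comp: "g \<in> Inn op \<Longrightarrow> f \<in> Inn op \<Longrightarrow> g \<circ> f \<in> Inn op"
  by (induction rule: Inn.induct) (auto simp: comp_assoc intro: Inn.intros)

lemma Inn_bij: "f \<in> Inn op \<Longrightarrow> is_quandle op \<Longrightarrow> bij f"
  by (induction rule: Inn.induct) (auto simp: is_quandle_def intro: bij_comp bij_imp_bij_inv)

lemma right_translation_in_Inn: "(\<lambda>x. op x y) \<in> Inn op"
  using Inn.Inn_R[OF Inn.Inn_id, of op y] by simp

lemma inv_right_translation_in_Inn: "inv_into UNIV (\<lambda>x. op x y) \<in> Inn op"
  using Inn.Inn_Rinv[OF Inn.Inn_id, of op y] by simp

lemma Inn_inv:
  assumes q: "is_quandle op"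
  shows "f \<in> Inn op \<Longrightarrow> inv_into UNIV f \<in> Inn op"
proof (induction rule: Inn.induct)
  case Inn_id
  then show ?case by (metis Inn.Inn_id inv_id)
next
  case (Inn_R f y)
  have "bij (\<lambda>x. op x y)" "bij f"
    using q Inn_bij[OF Inn_R.hyps(1) q] by (auto simp: is_quandle_def)
  then have "inv_into UNIV ((\<lambda>x. op x y) \<circ> f) = inv_into UNIV f \<circ> inv_into UNIV (\<lambda>x. op x y)"
    by (simp add: o_inv_distrib)
  then show ?case using Inn_R.IH Inn_comp inv_right_translation_in_Inn by metis
next
  case (Inn_Rinv f y)
  have "bij (\<lambda>x. op x y)" "bij f"
    using q Inn_bij[OF Inn_Rinv.hyps(1) q] by (auto simp: is_quandle_def)
  then have "inv_into UNIV (inv_into UNIV (\<lambda>x. op x y) \<circ> f) = inv_into UNIV f \<circ> (\<lambda>x. op x y)"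
    by (simp add: o_inv_distrib bij_imp_bij_inv inv_inv_eq)
  then show ?case using Inn_Rinv.IH Inn_comp right_translation_in_Inn by metis
qed

definition Inn_group :: "('a \<Rightarrow> 'a \<Rightarrow> 'a) \<Rightarrow> ('a \<Rightarrow> 'a) monoid" where
  "Inn_group op = \<lparr>carrier = Inn op, mult = (\<circ>), one = id\<rparr>"

lemma group_Inn_group:
  assumes q: "is_quandle op"
  shows "group (Inn_group op)"
proof (rule groupI)
  fix f assume "f \<in> carrier (Inn_group op)"
  then have "f \<in> Inn op" "bij f" using Inn_bij[OF _ q] by (auto simp: Inn_group_def)
  then show "\<exists>g\<in>carrier (Inn_group op). g \<otimes>\<^bsub>Inn_group op\<^esub> f = \<one>\<^bsub>Inn_group op\<^esub>"
    by (intro bexI[of _ "inv_into UNIV f"]) (auto simp: Inn_group_def Inn_inv[OF q] bij_is_inj)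
qed (auto simp: Inn_group_def Inn_comp Inn.Inn_id comp_assoc)

lemma comp_monoid_pow:
  "f [^]\<^bsub>\<lparr>carrier = C, mult = (\<circ>), one = id\<rparr>\<^esub> (n::nat) = f ^^ n"
  by (induction n) (auto simp: funpow_swap1)

lemma group_action_Inn_group:
  assumes q: "is_quandle op"
  shows "group_action (Inn_group op) UNIV (\<lambda>g. g)"
  unfolding group_action_def group_hom_def group_hom_axioms_def
proof (intro conjI group_Inn_group[OF q] group_BijGroup homI)
  fix f assume "f \<in> carrier (Inn_group op)"
  then show "f \<in> carrier (BijGroup UNIV)"
    using Inn_bij[OF _ q] by (auto simp: Inn_group_def BijGroup_def Bij_def)
  fix g assume "g \<in> carrier (Inn_group op)"
  with \<open>f \<in> carrier (Inn_group op)\<close>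
  show "f \<otimes>\<^bsub>Inn_group op\<^esub> g = f \<otimes>\<^bsub>BijGroup UNIV\<^esub> g"
    using Inn_bij[OF _ q] by (auto simp: Inn_group_def BijGroup_def Bij_def compose_def)
qed

lemma card_Inn_eq_card_mult_stabilizer:
  fixes op :: "'a::finite \<Rightarrow> 'a \<Rightarrow> 'a"
  assumes "is_quandle op" and "quandle_connected op"
  shows "card (Inn op) = card (UNIV :: 'a set) * card (stabilizer (Inn_group op) (\<lambda>g. g) x)"
proof -
  interpret group_action "Inn_group op" UNIV "\<lambda>g. g"
    using group_action_Inn_group[OF assms(1)] .
  have "orbit (Inn_group op) (\<lambda>g. g) x = UNIV"
    using assms(2) by (auto simp: orbit_def quandle_connected_def Inn_group_def) metis
  then show ?thesis
    using orbit_stabilizer_theorem[of x] by (simp add: order_def Inn_group_def)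
qed

lemma right_translation_pow_card_stabilizer:
  fixes op :: "'a::finite \<Rightarrow> 'a \<Rightarrow> 'a"
  assumes q: "is_quandle op"
  shows "(\<lambda>x. op x y) ^^ card (stabilizer (Inn_group op) (\<lambda>g. g) y) = id"
proof -
  interpret group_action "Inn_group op" UNIV "\<lambda>g. g"
    using group_action_Inn_group[OF q] .
  interpret G: group "Inn_group op" using group_Inn_group[OF q] .
  let ?S = "stabilizer (Inn_group op) (\<lambda>g. g) y"
  interpret S: group "Inn_group op\<lparr>carrier := ?S\<rparr>"
    using G.subgroup_imp_group[OF stabilizer_subgroup] by simp
  have "(\<lambda>x. op x y) \<in> ?S"
    using q right_translation_in_Inn
    by (auto simp: stabilizer_def Inn_group_def is_quandle_def)
  then have "(\<lambda>x. op x y) [^]\<^bsub>Inn_group op\<lparr>carrier := ?S\<rparr>\<^esub> order (Inn_group op\<lparr>carrier := ?S\<rparr>) = id"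
    using S.pow_order_eq_1 by (simp add: Inn_group_def)
  then show ?thesis
    by (simp add: Inn_group_def comp_monoid_pow order_def)
qed

lemma Least_common_period_dvd:
  fixes f :: "'b \<Rightarrow> 'a \<Rightarrow> 'a"
  assumes "0 < M" and "\<And>y. f y ^^ M = id"
  shows "(LEAST N. 0 < N \<and> (\<forall>x y. (f y ^^ N) x = x)) dvd M"
proof -
  define P where "P N \<longleftrightarrow> 0 < N \<and> (\<forall>x y. (f y ^^ N) x = x)" for N
  define t where "t = (LEAST N. P N)"
  have "P M" using assms by (simp add: P_def)
  then have "P t" unfolding t_def by (rule LeastI)
  then have t_period: "f y ^^ t = id" for y by (auto simp: P_def)
  have "f y ^^ (M mod t) = id" for y
  proof -
    have "f y ^^ M = f y ^^ (M mod t) \<circ> (f y ^^ t) ^^ (M div t)"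
      by (metis funpow_add funpow_mult mod_div_mult_eq mult.commute)
    then show ?thesis using assms(2) t_period by simp
  qed
  moreover have "M mod t < t" using \<open>P t\<close> by (simp add: P_def)
  ultimately have "M mod t = 0"
    using not_less_Least[of "M mod t" P] by (auto simp: P_def t_def)
  then show ?thesis by (simp add: P_def t_def mod_eq_0_iff_dvd)
qed

theorem lemma3p6:
  fixes op :: "'a::finite \<Rightarrow> 'a \<Rightarrow> 'a"
  assumes "is_quandle op"
    and "quandle_connected op"
  shows "quandle_type op dvd (card (Inn op) div card (UNIV :: 'a set))"
proof -
  define M where "M = card (Inn op) div card (UNIV :: 'a set)"
  have M_eq: "M = card (stabilizer (Inn_group op) (\<lambda>g. g) y)" for y
    using card_Inn_eq_card_mult_stabilizer[OF assms, of y] by (simp add: M_def)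
  have "id \<in> stabilizer (Inn_group op) (\<lambda>g. g) y" for y
    by (simp add: stabilizer_def Inn_group_def Inn.Inn_id)
  then have "0 < card (stabilizer (Inn_group op) (\<lambda>g. g) y)" for y
    using card_gt_0_iff by (metis empty_iff finite)
  then have "0 < M"
    using M_eq by metis
  moreover have "(\<lambda>x. op x y) ^^ M = id" for y
    using right_translation_pow_card_stabilizer[OF assms(1)] M_eq by simp
  ultimately show ?thesis
    using Least_common_period_dvd[of M "\<lambda>y x. op x y"]
    by (simp add: quandle_type_def M_def)
qed

end
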